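(* Fix $\theta\in(1/2,7/8]$, an interval $[\underline h,\bar h]\subset(0,1)$, $h_1\in[0,1]$, $\alpha\in[0,1]$. Assume that for every realization of the disorder and every $h_0\in[\underline h,\bar h]$, $\langle\sigma_i\sigma_j\rangle_{h_0,h_1,\alpha}-\langle\sigma_i\rangle_{h_0,h_1,\alpha}\langle\sigma_j\rangle_{h_0,h_1,\alpha}\ge 0$ for all $i,j$. Assume the couplings satisfy the condition that $(J_X)$ are independent with finite second moments and $\sum_{X\subset\{1,\dots,n\}}\mathrm{Var}(J_X)\le Cn$ for a constant $C$ independent of $n$, and let $C_P>0$ be a constant independent of $n,h_0,h_1,\alpha$ such that $\mathbb E[(P_n(h_0,h_1,\alpha)-p_n(h_0,h_1,\alpha))^2]\le C_P/n$ for all $h_0,h_1,\alpha\in[0,1]$. Then for all sufficiently large $n$, $$\int_{\underline h}^{\bar h}dh_0\,\mathbb E\big\langle\big(Q_1-\mathbb E\langle Q_1\rangle_{h_0,h_1,\alpha}\big)^2\big\rangle_{h_0,h_1,\alpha}\le\frac{5C_P+42}{n^{1/3}}.$$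
   Context: Spins $\boldsymbol\sigma\in\{-1,1\}^n$, $\sigma_X=\prod_{i\in X}\sigma_i$. The couplings $J_X\ge 0$, $X\subset\{1,\dots,n\}$, are independent random variables; $\tau_1,\dots,\tau_n$ are i.i.d. Poisson with mean $\alpha n^{\theta-1}$, independent of the couplings. Hamiltonian $\mathcal H(\boldsymbol\sigma)=-\sum_XJ_X\sigma_X-h_0\sum_i\sigma_i-h_1\sum_i\tau_i\sigma_i$, partition function $\mathcal Z_{h_0,h_1,\alpha}=\sum_{\boldsymbol\sigma}e^{-\mathcal H}$, Gibbs expectation $\langle\cdot\rangle_{h_0,h_1,\alpha}$ (for several replicas, the product Gibbs measure of independent copies). Pressure $P_n(h_0,h_1,\alpha)=\frac1n\ln\mathcal Z_{h_0,h_1,\alpha}$, $p_n=\mathbb EP_n$, where $\mathbb E$ is expectation over all couplings $J_X$ and over $\boldsymbol\tau$. Overlap $Q_1=\frac1n\sum_i\sigma_i$. *)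

theory Defs
  imports "HOL-Probability.Probability"
begin

definition spins :: "nat \<Rightarrow> (nat \<Rightarrow> real) set" where
  "spins n = PiE {1..n} (\<lambda>_. {-1, 1})"

definition hamiltonian ::
  "nat \<Rightarrow> (nat set \<Rightarrow> real) \<Rightarrow> (nat \<Rightarrow> nat) \<Rightarrow> real \<Rightarrow> real \<Rightarrow> (nat \<Rightarrow> real) \<Rightarrow> real" where
  "hamiltonian n J tau h0 h1 \<sigma> =
     - (\<Sum>X\<in>Pow {1..n}. J X * (\<Prod>i\<in>X. \<sigma> i))
     - h0 * (\<Sum>i\<in>{1..n}. \<sigma> i)
     - h1 * (\<Sum>i\<in>{1..n}. real (tau i) * \<sigma> i)"

definition partition_fn ::
  "nat \<Rightarrow> (nat set \<Rightarrow> real) \<Rightarrow> (nat \<Rightarrow> nat) \<Rightarrow> real \<Rightarrow> real \<Rightarrow> real" where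
  "partition_fn n J tau h0 h1 = (\<Sum>\<sigma>\<in>spins n. exp (- hamiltonian n J tau h0 h1 \<sigma>))"

definition gibbs ::
  "nat \<Rightarrow> (nat set \<Rightarrow> real) \<Rightarrow> (nat \<Rightarrow> nat) \<Rightarrow> real \<Rightarrow> real \<Rightarrow> ((nat \<Rightarrow> real) \<Rightarrow> real) \<Rightarrow> real" where
  "gibbs n J tau h0 h1 f =
     (\<Sum>\<sigma>\<in>spins n. f \<sigma> * exp (- hamiltonian n J tau h0 h1 \<sigma>)) / partition_fn n J tau h0 h1"

definition pressure ::
  "nat \<Rightarrow> (nat set \<Rightarrow> real) \<Rightarrow> (nat \<Rightarrow> nat) \<Rightarrow> real \<Rightarrow> real \<Rightarrow> real" where
  "pressure n J tau h0 h1 = ln (partition_fn n J tau h0 h1) / real n"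

definition overlap :: "nat \<Rightarrow> (nat \<Rightarrow> real) \<Rightarrow> real" where
  "overlap n \<sigma> = (\<Sum>i\<in>{1..n}. \<sigma> i) / real n"

text \<open>Poisson distribution with mean r \<ge> 0 (r = 0 allowed: point mass at 0).\<close>
definition poisson_measure :: "real \<Rightarrow> nat measure" where
  "poisson_measure r = density (count_space UNIV) (\<lambda>k. ennreal (r ^ k / fact k * exp (- r)))"

definition disorder ::
  "(nat \<Rightarrow> nat set \<Rightarrow> real measure) \<Rightarrow> real \<Rightarrow> nat \<Rightarrow> real \<Rightarrow> ((nat set \<Rightarrow> real) \<times> (nat \<Rightarrow> nat)) measure" where
  "disorder \<mu> \<theta> n \<alpha> =
     (\<Pi>\<^sub>M X\<in>Pow {1..n}. \<mu> n X) \<Otimes>\<^sub>M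
     (\<Pi>\<^sub>M i\<in>{1..n}. poisson_measure (\<alpha> * real n powr (\<theta> - 1)))"

end

theory Submission
  imports Defs "HOL-Real_Asymp.Real_Asymp"
begin

(*
  The pressure P(h) = ln Z(h) / n is convex in the field h, with the thermal mean overlap <Q> as
  subgradient, hence 1-Lipschitz.  Thermal fluctuations: the second difference of the log-moment
  generating function of n Q at step 1/(2n) is at least ln (1 + Var(Q) / 8), which yields
  <Q^2> - <Q>^2 <= 16 n (P(h + eta) + P(h - eta) - 2 P(h)) with eta = 1/(2n).  Disorder
  fluctuations: convexity squeezes delta (<Q> - E<Q>) between differences of P - E P at h and
  h +- delta, up to the second difference of p = E P at scale delta, and the concentration
  hypothesis bounds E (P - p)^2 by C_P / n.  Integrated over h, a second difference of the
  1-Lipschitz function p at scale eps contributes at most 2 eps^2, so the integral is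
  O(1/n + C_P / (n delta^2) + delta); delta of order n^(-1/3) balances the last two terms.
*)

section \<open>Weighted averages\<close>

lemma cosh_lower_bound: "2 + (y::real)\<^sup>2 / 2 \<le> exp y + exp (- y)"
proof (cases "0 \<le> y")
  case True
  then show ?thesis
    using exp_lower_Taylor_quadratic[of y] exp_ge_add_one_self[of "- y"] by linarith
next
  case False
  then have "1 - y + y\<^sup>2 / 2 \<le> exp (- y)"
    using exp_lower_Taylor_quadratic[of "- y"] by simp
  then show ?thesis
    using exp_ge_add_one_self[of y] by linarith
qed

definition weighted_avg :: "'a set \<Rightarrow> ('a \<Rightarrow> real) \<Rightarrow> ('a \<Rightarrow> real) \<Rightarrow> real" where
  "weighted_avg A w f = (\<Sum>x\<in>A. f x * w x) / (\<Sum>x\<in>A. w x)"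

locale positive_weights =
  fixes A :: "'a set" and w :: "'a \<Rightarrow> real"
  assumes finite_domain: "finite A" and nonempty_domain: "A \<noteq> {}"
    and weight_pos: "\<And>x. x \<in> A \<Longrightarrow> 0 < w x"
begin

abbreviation avg :: "('a \<Rightarrow> real) \<Rightarrow> real" where
  "avg \<equiv> weighted_avg A w"

lemma weight_sum_pos: "0 < (\<Sum>x\<in>A. w x)"
  using finite_domain nonempty_domain weight_pos by (simp add: sum_pos)

lemma avg_add: "avg (\<lambda>x. f x + g x) = avg f + avg g"
  unfolding weighted_avg_def by (simp add: distrib_right sum.distrib add_divide_distrib)

lemma avg_diff: "avg (\<lambda>x. f x - g x) = avg f - avg g"
  unfolding weighted_avg_def by (simp add: left_diff_distrib sum_subtractf diff_divide_distrib)

lemma avg_cmult: "avg (\<lambda>x. c * f x) = c * avg f"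
  unfolding weighted_avg_def by (simp add: sum_distrib_left mult.assoc)

lemma avg_const: "avg (\<lambda>x. c) = c"
  unfolding weighted_avg_def using weight_sum_pos by (simp add: sum_distrib_left[symmetric])

lemma avg_cong: "(\<And>x. x \<in> A \<Longrightarrow> f x = g x) \<Longrightarrow> avg f = avg g"
  unfolding weighted_avg_def by (simp cong: sum.cong)

lemma avg_mono: "(\<And>x. x \<in> A \<Longrightarrow> f x \<le> g x) \<Longrightarrow> avg f \<le> avg g"
  unfolding weighted_avg_def using weight_sum_pos weight_pos
  by (intro divide_right_mono sum_mono mult_right_mono) (auto intro: less_imp_le)

lemma abs_avg_le:
  assumes "\<And>x. x \<in> A \<Longrightarrow> \<bar>f x\<bar> \<le> c"
  shows "\<bar>avg f\<bar> \<le> c"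
proof -
  have "avg f \<le> avg (\<lambda>_. c)" and "avg (\<lambda>_. - c) \<le> avg f"
    using assms by (intro avg_mono; fastforce simp: abs_le_iff)+
  then show ?thesis by (simp add: avg_const)
qed

lemma avg_square_shift: "avg (\<lambda>x. (g x - m)\<^sup>2) = (avg (\<lambda>x. (g x)\<^sup>2) - (avg g)\<^sup>2) + (avg g - m)\<^sup>2"
proof -
  have "avg (\<lambda>x. (g x - m)\<^sup>2) = avg (\<lambda>x. (g x)\<^sup>2 - (2 * m) * g x + m\<^sup>2)"
    by (rule avg_cong) (simp add: power2_eq_square algebra_simps)
  also have "\<dots> = avg (\<lambda>x. (g x)\<^sup>2) - 2 * m * avg g + m\<^sup>2"
    by (simp add: avg_add avg_diff avg_cmult avg_const)
  finally show ?thesis by (simp add: power2_eq_square algebra_simps)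
qed

lemma avg_variance_eq: "avg (\<lambda>x. (g x)\<^sup>2) - (avg g)\<^sup>2 = avg (\<lambda>x. (g x - avg g)\<^sup>2)"
  using avg_square_shift[of g "avg g"] by simp

lemma avg_variance_nonneg: "0 \<le> avg (\<lambda>x. (g x)\<^sup>2) - (avg g)\<^sup>2"
  unfolding avg_variance_eq using avg_mono[of "\<lambda>_. 0" "\<lambda>x. (g x - avg g)\<^sup>2"] by (simp add: avg_const)

lemma exp_avg_le: "exp (avg g) \<le> avg (\<lambda>x. exp (g x))"
proof -
  let ?c = "avg g"
  have "avg (\<lambda>x. exp ?c * (1 + (g x - ?c))) \<le> avg (\<lambda>x. exp (g x))"
  proof (rule avg_mono)
    fix x
    have "exp ?c * (1 + (g x - ?c)) \<le> exp ?c * exp (g x - ?c)"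
      by (intro mult_left_mono) auto
    then show "exp ?c * (1 + (g x - ?c)) \<le> exp (g x)" by (simp add: exp_diff)
  qed
  then show ?thesis by (simp add: avg_cmult avg_add avg_diff avg_const)
qed

lemma sum_weight_exp_eq: "(\<Sum>x\<in>A. w x * exp (g x)) = (\<Sum>x\<in>A. w x) * avg (\<lambda>x. exp (g x))"
  unfolding weighted_avg_def using weight_sum_pos by (simp add: mult.commute)

lemma avg_le_ln_sum_exp: "avg g \<le> ln (\<Sum>x\<in>A. w x * exp (g x)) - ln (\<Sum>x\<in>A. w x)"
proof -
  have pos: "0 < avg (\<lambda>x. exp (g x))"
    using exp_avg_le[of g] exp_gt_zero[of "avg g"] by linarith
  have "avg g \<le> ln (avg (\<lambda>x. exp (g x)))"
    using exp_avg_le[of g] pos by (simp add: ln_ge_iff)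
  then show ?thesis using weight_sum_pos pos by (simp add: sum_weight_exp_eq ln_mult)
qed

lemma sum_weight_exp_centered:
  "(\<Sum>x\<in>A. w x * exp (s * g x)) = (\<Sum>x\<in>A. w x) * exp (s * avg g) * avg (\<lambda>x. exp (s * (g x - avg g)))"
proof -
  have "avg (\<lambda>x. exp (s * g x)) = avg (\<lambda>x. exp (s * avg g) * exp (s * (g x - avg g)))"
    by (rule avg_cong) (simp add: mult_exp_exp algebra_simps)
  then show ?thesis by (simp add: sum_weight_exp_eq avg_cmult)
qed

lemma ln_sum_exp_second_difference:
  "ln (1 + t\<^sup>2 * (avg (\<lambda>x. (g x)\<^sup>2) - (avg g)\<^sup>2) / 2)
     \<le> ln (\<Sum>x\<in>A. w x * exp (t * g x)) + ln (\<Sum>x\<in>A. w x * exp (- t * g x)) - 2 * ln (\<Sum>x\<in>A. w x)"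
proof -
  define c where "c = avg g"
  define a where "a = avg (\<lambda>x. exp (t * (g x - c)))"
  define b where "b = avg (\<lambda>x. exp (- t * (g x - c)))"
  define V where "V = avg (\<lambda>x. (g x - c)\<^sup>2)"
  have centered: "avg (\<lambda>x. s * (g x - c)) = 0" for s
    by (simp add: avg_cmult avg_diff avg_const c_def)
  have a1: "1 \<le> a" and b1: "1 \<le> b"
    using exp_avg_le[of "\<lambda>x. t * (g x - c)"] exp_avg_le[of "\<lambda>x. - t * (g x - c)"]
    unfolding a_def b_def centered by simp_all
  have "avg (\<lambda>x. 2 + t\<^sup>2 / 2 * (g x - c)\<^sup>2) \<le> avg (\<lambda>x. exp (t * (g x - c)) + exp (- t * (g x - c)))"
    using cosh_lower_bound[of "t * (g _ - c)"] by (intro avg_mono) (simp add: power_mult_distrib)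
  then have "2 + t\<^sup>2 / 2 * V \<le> a + b"
    unfolding a_def b_def V_def by (simp only: avg_add avg_cmult avg_const)
  moreover have "a + b - 1 \<le> a * b"
    using mult_nonneg_nonneg[of "a - 1" "b - 1"] a1 b1 by (simp add: algebra_simps)
  moreover have "0 \<le> V"
    unfolding V_def using avg_mono[of "\<lambda>_. 0" "\<lambda>x. (g x - c)\<^sup>2"] by (simp add: avg_const)
  ultimately have "0 < 1 + t\<^sup>2 * V / 2" and "1 + t\<^sup>2 * V / 2 \<le> a * b"
    by (simp_all add: add_pos_nonneg)
  then have "ln (1 + t\<^sup>2 * V / 2) \<le> ln (a * b)"
    by simp
  also have "\<dots> = ln (\<Sum>x\<in>A. w x * exp (t * g x)) + ln (\<Sum>x\<in>A. w x * exp (- t * g x)) - 2 * ln (\<Sum>x\<in>A. w x)"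
    unfolding sum_weight_exp_centered[of t] sum_weight_exp_centered[of "- t"]
    using weight_sum_pos a1 b1 by (simp add: ln_mult a_def b_def c_def)
  finally show ?thesis
    unfolding V_def c_def avg_variance_eq .
qed

end

section \<open>Thermal bounds for the spin system\<close>

definition second_difference :: "(real \<Rightarrow> real) \<Rightarrow> real \<Rightarrow> real \<Rightarrow> real" where
  "second_difference f e x = f (x + e) + f (x - e) - 2 * f x"

lemma second_difference_le_lipschitz:
  assumes "\<And>x y. \<bar>f x - f y\<bar> \<le> \<bar>x - y\<bar>"
  shows "second_difference f e x \<le> 2 * \<bar>e\<bar>"
  using assms[of "x + e" x] assms[of "x - e" x] unfolding second_difference_def by (simp add: abs_le_iff)

lemma finite_spins: "finite (spins n)"
  unfolding spins_def by (rule finite_PiE) auto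

lemma spins_nonempty: "spins n \<noteq> {}"
  unfolding spins_def by (simp add: PiE_eq_empty_iff)

lemma abs_spin: "\<sigma> \<in> spins n \<Longrightarrow> i \<in> {1..n} \<Longrightarrow> \<bar>\<sigma> i\<bar> = 1"
  unfolding spins_def using PiE_mem[of \<sigma> "{1..n}" "\<lambda>_. {- 1, 1}" i] by auto

lemma positive_weights_boltzmann:
  "positive_weights (spins n) (\<lambda>\<sigma>. exp (- hamiltonian n J tau h h1 \<sigma>))"
  by unfold_locales (auto simp: finite_spins spins_nonempty)

lemma gibbs_eq_weighted_avg:
  "gibbs n J tau h h1 f = weighted_avg (spins n) (\<lambda>\<sigma>. exp (- hamiltonian n J tau h h1 \<sigma>)) f"
  unfolding gibbs_def weighted_avg_def partition_fn_def by (simp add: mult.commute)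

lemma sum_spins_eq_overlap: "(\<Sum>i\<in>{1..n}. \<sigma> i) = real n * overlap n \<sigma>"
  unfolding overlap_def by (cases "n = 0") simp_all

lemma abs_overlap_le_1: "\<sigma> \<in> spins n \<Longrightarrow> \<bar>overlap n \<sigma>\<bar> \<le> 1"
proof -
  assume "\<sigma> \<in> spins n"
  then have "\<bar>\<Sum>i\<in>{1..n}. \<sigma> i\<bar> \<le> real n"
    by (intro order_trans[OF sum_abs]) (simp add: abs_spin)
  then show ?thesis
    unfolding overlap_def by (cases "n = 0") (auto simp: abs_divide divide_le_eq)
qed

lemma abs_gibbs_overlap_le_1: "\<bar>gibbs n J tau h h1 (overlap n)\<bar> \<le> 1"
proof -
  interpret positive_weights "spins n" "\<lambda>\<sigma>. exp (- hamiltonian n J tau h h1 \<sigma>)"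
    by (rule positive_weights_boltzmann)
  show ?thesis unfolding gibbs_eq_weighted_avg by (rule abs_avg_le) (rule abs_overlap_le_1)
qed

lemma pressure_eq_ln_sum:
  "1 \<le> n \<Longrightarrow> real n * pressure n J tau h h1 = ln (\<Sum>\<sigma>\<in>spins n. exp (- hamiltonian n J tau h h1 \<sigma>))"
  by (simp add: pressure_def partition_fn_def)

lemma pressure_field_shift:
  assumes "1 \<le> n"
  shows "real n * pressure n J tau (h + t) h1
     = ln (\<Sum>\<sigma>\<in>spins n. exp (- hamiltonian n J tau h h1 \<sigma>) * exp (t * (real n * overlap n \<sigma>)))"
  unfolding pressure_eq_ln_sum[OF assms] hamiltonian_def sum_spins_eq_overlap
  by (simp add: exp_add[symmetric] algebra_simps)

lemma pressure_tangent:
  assumes "1 \<le> n"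
  shows "t * gibbs n J tau h h1 (overlap n) \<le> pressure n J tau (h + t) h1 - pressure n J tau h h1"
proof -
  interpret positive_weights "spins n" "\<lambda>\<sigma>. exp (- hamiltonian n J tau h h1 \<sigma>)"
    by (rule positive_weights_boltzmann)
  have "real n * (t * gibbs n J tau h h1 (overlap n)) = avg (\<lambda>\<sigma>. t * (real n * overlap n \<sigma>))"
    by (simp add: gibbs_eq_weighted_avg avg_cmult)
  also have "\<dots> \<le> real n * pressure n J tau (h + t) h1 - real n * pressure n J tau h h1"
    unfolding pressure_field_shift[OF assms] pressure_eq_ln_sum[OF assms, of J tau h h1]
    by (rule avg_le_ln_sum_exp)
  finally show ?thesis
    using assms by (simp add: right_diff_distrib[symmetric])
qed

lemma pressure_lipschitz:
  assumes "1 \<le> n"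
  shows "\<bar>pressure n J tau a h1 - pressure n J tau b h1\<bar> \<le> \<bar>a - b\<bar>"
proof -
  have abs_le: "\<bar>s * gibbs n J tau x h1 (overlap n)\<bar> \<le> \<bar>s\<bar>" for s x
    using abs_gibbs_overlap_le_1 by (simp add: abs_mult mult_left_le)
  show ?thesis
    using pressure_tangent[OF assms, of "a - b" J tau b h1] pressure_tangent[OF assms, of "b - a" J tau a h1]
      abs_le[of "a - b" b] abs_le[of "b - a" a] abs_minus_commute[of a b]
    by (simp add: abs_le_iff)
qed

lemma pressure_second_difference_nonneg:
  "1 \<le> n \<Longrightarrow> 0 \<le> second_difference (\<lambda>x. pressure n J tau x h1) e h"
  using pressure_tangent[of n e J tau h h1] pressure_tangent[of n "- e" J tau h h1]
  unfolding second_difference_def by simp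

text \<open>At scale \<open>1/(2n)\<close> the rescaled second difference \<open>D\<close> of the pressure lies in [0,1],
  where \<open>exp D \<le> 1 + 2 D\<close> linearises the bound \<open>ln (1 + Var/8) \<le> D\<close>.\<close>
lemma thermal_variance_le_second_difference:
  assumes "1 \<le> n"
  shows "gibbs n J tau h h1 (\<lambda>\<sigma>. (overlap n \<sigma>)\<^sup>2) - (gibbs n J tau h h1 (overlap n))\<^sup>2
    \<le> 16 * real n * second_difference (\<lambda>x. pressure n J tau x h1) (1 / (2 * real n)) h"
proof -
  interpret positive_weights "spins n" "\<lambda>\<sigma>. exp (- hamiltonian n J tau h h1 \<sigma>)"
    by (rule positive_weights_boltzmann)
  define t where "t = 1 / (2 * real n)"
  define V where "V = gibbs n J tau h h1 (\<lambda>\<sigma>. (overlap n \<sigma>)\<^sup>2) - (gibbs n J tau h h1 (overlap n))\<^sup>2"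
  define D where "D = real n * second_difference (\<lambda>x. pressure n J tau x h1) t h"
  have n0: "0 < real n" and nt: "real n * t = 1 / 2"
    using assms by (simp_all add: t_def)
  have "t\<^sup>2 * (avg (\<lambda>\<sigma>. (real n * overlap n \<sigma>)\<^sup>2) - (avg (\<lambda>\<sigma>. real n * overlap n \<sigma>))\<^sup>2) / 2
      = (real n * t)\<^sup>2 * V / 2"
    unfolding V_def gibbs_eq_weighted_avg by (simp add: power_mult_distrib avg_cmult algebra_simps)
  also have "\<dots> = V / 8"
    unfolding nt by (simp add: power2_eq_square)
  finally have scaled_variance: "t\<^sup>2 * (avg (\<lambda>\<sigma>. (real n * overlap n \<sigma>)\<^sup>2)
      - (avg (\<lambda>\<sigma>. real n * overlap n \<sigma>))\<^sup>2) / 2 = V / 8" .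
  have "ln (1 + V / 8) \<le> D"
    using ln_sum_exp_second_difference[of t "\<lambda>\<sigma>. real n * overlap n \<sigma>"]
    unfolding scaled_variance D_def second_difference_def pressure_field_shift[OF assms, of J tau h, symmetric]
      pressure_eq_ln_sum[OF assms, symmetric]
    by (simp add: algebra_simps)
  moreover have "0 \<le> V"
    unfolding V_def gibbs_eq_weighted_avg by (rule avg_variance_nonneg)
  ultimately have "1 + V / 8 \<le> exp D"
    by (metis add_pos_nonneg divide_nonneg_pos exp_le_cancel_iff exp_ln zero_less_numeral zero_less_one)
  moreover have "0 \<le> D"
    unfolding D_def using pressure_second_difference_nonneg[OF assms] n0 by simp
  moreover have "D \<le> 1"
    using second_difference_le_lipschitz[OF pressure_lipschitz[OF assms], of J tau h1 t h] n0 nt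
    unfolding D_def by (simp add: t_def pos_le_divide_eq mult.commute)
  ultimately have "V / 8 \<le> 2 * D"
    using exp_bound[of D] mult_left_le[of D D] by (simp add: power2_eq_square)
  then show ?thesis unfolding V_def D_def t_def by simp
qed

lemma abs_hamiltonian_le:
  assumes "\<sigma> \<in> spins n"
  shows "\<bar>hamiltonian n J tau h h1 \<sigma>\<bar>
    \<le> (\<Sum>X\<in>Pow {1..n}. \<bar>J X\<bar>) + real n * \<bar>h\<bar> + \<bar>h1\<bar> * (\<Sum>i\<in>{1..n}. real (tau i))"
proof -
  have "\<bar>\<Prod>i\<in>X. \<sigma> i\<bar> = 1" if "X \<in> Pow {1..n}" for X
    using that assms by (auto simp: abs_prod abs_spin intro!: prod.neutral)
  then have "\<bar>\<Sum>X\<in>Pow {1..n}. J X * (\<Prod>i\<in>X. \<sigma> i)\<bar> \<le> (\<Sum>X\<in>Pow {1..n}. \<bar>J X\<bar>)"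
    by (intro order_trans[OF sum_abs]) (simp add: abs_mult)
  moreover have "\<bar>h * (\<Sum>i\<in>{1..n}. \<sigma> i)\<bar> \<le> real n * \<bar>h\<bar>"
    using mult_left_mono[OF abs_overlap_le_1[OF assms], of "real n * \<bar>h\<bar>"]
    unfolding sum_spins_eq_overlap by (simp add: abs_mult mult_ac)
  moreover have "\<bar>\<Sum>i\<in>{1..n}. real (tau i) * \<sigma> i\<bar> \<le> (\<Sum>i\<in>{1..n}. real (tau i))"
    by (intro order_trans[OF sum_abs]) (simp add: abs_mult abs_spin[OF assms])
  then have "\<bar>h1 * (\<Sum>i\<in>{1..n}. real (tau i) * \<sigma> i)\<bar> \<le> \<bar>h1\<bar> * (\<Sum>i\<in>{1..n}. real (tau i))"
    by (simp add: abs_mult mult_left_mono)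
  ultimately show ?thesis
    unfolding hamiltonian_def by linarith
qed

lemma abs_pressure_le:
  assumes "\<And>\<sigma>. \<sigma> \<in> spins n \<Longrightarrow> \<bar>hamiltonian n J tau h h1 \<sigma>\<bar> \<le> R"
  shows "\<bar>pressure n J tau h h1\<bar> \<le> R + ln (card (spins n))"
proof -
  let ?Z = "partition_fn n J tau h h1" and ?c = "real (card (spins n))"
  have c1: "1 \<le> ?c"
    using finite_spins spins_nonempty by (simp add: Suc_leI card_gt_0_iff)
  have H_bounds: "- hamiltonian n J tau h h1 \<sigma> \<le> R" "hamiltonian n J tau h h1 \<sigma> \<le> R"
    if "\<sigma> \<in> spins n" for \<sigma>
    using assms[OF that] by linarith+
  have "?c * exp (- R) \<le> ?Z"
    unfolding partition_fn_def by (rule sum_bounded_below) (simp add: H_bounds)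
  moreover have "?Z \<le> ?c * exp R"
    unfolding partition_fn_def by (rule sum_bounded_above) (simp add: H_bounds)
  moreover have "0 < ?c * exp (- R)"
    using c1 by simp
  ultimately have "ln (?c * exp (- R)) \<le> ln ?Z" and "ln ?Z \<le> ln (?c * exp R)"
    by (simp_all del: ln_le_cancel_iff add: ln_mono order_less_le_trans)
  then have "ln ?c - R \<le> ln ?Z" and "ln ?Z \<le> ln ?c + R"
    using c1 by (simp_all add: ln_mult)
  moreover have "\<bar>pressure n J tau h h1\<bar> \<le> \<bar>ln ?Z\<bar>"
    unfolding pressure_def by (cases "n = 0") (simp_all add: abs_divide divide_le_eq mult_le_cancel_left1)
  moreover have "0 \<le> ln ?c"
    using c1 by simp
  ultimately show ?thesis by linarith
qed

lemma square_le_of_bounds: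
  fixes y :: real
  assumes "l \<le> y" "y \<le> u"
  shows "y\<^sup>2 \<le> u\<^sup>2 + l\<^sup>2"
proof (cases "0 \<le> y")
  case True
  then have "y\<^sup>2 \<le> u\<^sup>2" using assms(2) by (intro power_mono) auto
  then show ?thesis by (simp add: add_increasing2)
next
  case False
  then have "(- y)\<^sup>2 \<le> (- l)\<^sup>2" using assms(1) by (intro power_mono) auto
  then show ?thesis by (simp add: add_increasing)
qed

lemma square_sum3_le: "((a::real) + b + c)\<^sup>2 \<le> 3 * (a\<^sup>2 + b\<^sup>2 + c\<^sup>2)"
proof -
  have "0 \<le> (a - b)\<^sup>2 + (b - c)\<^sup>2 + (a - c)\<^sup>2" by simp
  then show ?thesis by (simp add: power2_eq_square algebra_simps)
qed

lemma gibbs_overlap_deviation_le: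
  fixes p :: "real \<Rightarrow> real" and J :: "nat set \<Rightarrow> real" and tau :: "nat \<Rightarrow> nat" and h1 :: real
  assumes n: "1 \<le> n" and "0 < \<delta>"
    and upper: "\<delta> * m \<le> p (h + \<delta>) - p h" and lower: "- \<delta> * m \<le> p (h - \<delta>) - p h"
  defines "e \<equiv> \<lambda>x. pressure n J tau x h1 - p x" and "s \<equiv> second_difference p \<delta> h"
  shows "gibbs n J tau h h1 (\<lambda>\<sigma>. (overlap n \<sigma> - m)\<^sup>2)
    \<le> 16 * real n * second_difference (\<lambda>x. pressure n J tau x h1) (1 / (2 * real n)) h
      + 3 / \<delta>\<^sup>2 * ((e (h + \<delta>))\<^sup>2 + (e h)\<^sup>2 + s\<^sup>2) + 3 / \<delta>\<^sup>2 * ((e h)\<^sup>2 + (e (h - \<delta>))\<^sup>2 + s\<^sup>2)"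
proof -
  interpret positive_weights "spins n" "\<lambda>\<sigma>. exp (- hamiltonian n J tau h h1 \<sigma>)"
    by (rule positive_weights_boltzmann)
  define G where "G = gibbs n J tau h h1 (overlap n)"
  have shift: "gibbs n J tau h h1 (\<lambda>\<sigma>. (overlap n \<sigma> - m)\<^sup>2)
      = (gibbs n J tau h h1 (\<lambda>\<sigma>. (overlap n \<sigma>)\<^sup>2) - G\<^sup>2) + (G - m)\<^sup>2"
    unfolding G_def gibbs_eq_weighted_avg by (rule avg_square_shift)
  have le_upper: "\<delta> * (G - m) \<le> e (h + \<delta>) - e h + s"
    using pressure_tangent[OF n, of \<delta> J tau h h1] lower
    unfolding G_def e_def s_def second_difference_def by (simp add: algebra_simps)
  have ge_lower: "e h - e (h - \<delta>) - s \<le> \<delta> * (G - m)"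
    using pressure_tangent[OF n, of "- \<delta>" J tau h h1] upper
    unfolding G_def e_def s_def second_difference_def by (simp add: algebra_simps)
  have "\<delta>\<^sup>2 * (G - m)\<^sup>2 \<le> (e (h + \<delta>) - e h + s)\<^sup>2 + (e h - e (h - \<delta>) - s)\<^sup>2"
    using square_le_of_bounds[OF ge_lower le_upper] by (simp add: power_mult_distrib)
  then have "gibbs n J tau h h1 (\<lambda>\<sigma>. (overlap n \<sigma> - m)\<^sup>2)
      \<le> (gibbs n J tau h h1 (\<lambda>\<sigma>. (overlap n \<sigma>)\<^sup>2) - G\<^sup>2)
        + ((e (h + \<delta>) - e h + s)\<^sup>2 + (e h - e (h - \<delta>) - s)\<^sup>2) / \<delta>\<^sup>2"
    unfolding shift using \<open>0 < \<delta>\<close> by (simp add: le_divide_eq mult.commute)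
  also have "\<dots> \<le> 16 * real n * second_difference (\<lambda>x. pressure n J tau x h1) (1 / (2 * real n)) h
      + (3 * ((e (h + \<delta>))\<^sup>2 + (e h)\<^sup>2 + s\<^sup>2) + 3 * ((e h)\<^sup>2 + (e (h - \<delta>))\<^sup>2 + s\<^sup>2)) / \<delta>\<^sup>2"
    using thermal_variance_le_second_difference[OF n, of J tau h h1]
      square_sum3_le[of "e (h + \<delta>)" "- e h" s] square_sum3_le[of "e h" "- e (h - \<delta>)" "- s"]
    unfolding G_def by (intro add_mono divide_right_mono) simp_all
  finally show ?thesis
    by (simp add: add_divide_distrib)
qed

section \<open>Second differences of Lipschitz functions\<close>

lemma continuous_on_1_lipschitz:
  fixes p :: "real \<Rightarrow> real"
  assumes "\<And>x y. \<bar>p x - p y\<bar> \<le> \<bar>x - y\<bar>"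
  shows "continuous_on S p"
  by (rule lipschitz_on_continuous_on[of 1]) (auto intro!: lipschitz_onI simp: dist_real_def assms)

lemma integral_shift_real: "integral {a..b} (\<lambda>x. f (x + c)) = integral {a + c..b + c} (f :: real \<Rightarrow> real)"
  using integral_shift_Icc_real[of a b f c] by (simp add: comp_def add.commute)

lemma abs_integral_increment_difference_le:
  fixes p :: "real \<Rightarrow> real"
  assumes lip: "\<And>x y. \<bar>p x - p y\<bar> \<le> \<bar>x - y\<bar>" and "0 \<le> \<eta>"
  shows "\<bar>integral {x..x + \<eta>} p - integral {x - \<eta>..x} p\<bar> \<le> \<eta>\<^sup>2"
proof -
  have cont: "continuous_on S p" for S
    using continuous_on_1_lipschitz[OF lip] .
  have cont_shift: "continuous_on S (\<lambda>h. p (h + \<eta>))" for S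
    by (intro continuous_on_compose2[OF cont[of UNIV]] continuous_intros) auto
  have "integral {x..x + \<eta>} p - integral {x - \<eta>..x} p = integral {x - \<eta>..x} (\<lambda>h. p (h + \<eta>) - p h)"
    using integral_shift_real[of "x - \<eta>" x p \<eta>]
    by (simp add: integral_diff integrable_continuous_interval cont cont_shift)
  also have "norm \<dots> \<le> \<eta> * (x - (x - \<eta>))"
  proof (rule integral_bound)
    show "norm (p (h + \<eta>) - p h) \<le> \<eta>" for h
      using lip[of "h + \<eta>" h] assms(2) by simp
  qed (use assms(2) in \<open>auto intro: continuous_on_diff cont cont_shift\<close>)
  finally show ?thesis by (simp add: power2_eq_square)
qed

text \<open>Telescoping reduces the integral to four boundary integrals over intervals of
  length \<open>\<eta>\<close>, each pair of which differs by at most \<open>\<eta>\<^sup>2\<close>.\<close>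
lemma integral_second_difference_le:
  fixes p :: "real \<Rightarrow> real"
  assumes lip: "\<And>x y. \<bar>p x - p y\<bar> \<le> \<bar>x - y\<bar>" and "a \<le> b" and "0 \<le> \<eta>"
  shows "second_difference p \<eta> integrable_on {a..b}"
    and "integral {a..b} (second_difference p \<eta>) \<le> 2 * \<eta>\<^sup>2"
proof -
  have cont: "continuous_on S p" for S
    using continuous_on_1_lipschitz[OF lip] .
  have cont_sd: "continuous_on S (second_difference p \<eta>)" for S
    unfolding second_difference_def
    by (intro continuous_intros continuous_on_compose2[OF cont[of UNIV]] cont) auto
  then show "second_difference p \<eta> integrable_on {a..b}"
    by (rule integrable_continuous_interval)
  have int_p: "p integrable_on {u..v}" for u v
    by (rule integrable_continuous_interval[OF cont])
  define \<Phi> where "\<Phi> x = integral {a - \<eta>..x} p" for x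
  have I: "integral {u..v} p = \<Phi> v - \<Phi> u" if "a - \<eta> \<le> u" "u \<le> v" for u v
    using Henstock_Kurzweil_Integration.integral_combine[OF that int_p] unfolding \<Phi>_def by simp
  have "integral {a..b} (second_difference p \<eta>)
      = integral {a..b} (\<lambda>h. p (h + \<eta>)) + integral {a..b} (\<lambda>h. p (h + - \<eta>)) - 2 * integral {a..b} p"
    unfolding second_difference_def using cont
    by (simp add: integral_diff integral_add integrable_continuous_interval continuous_intros
        continuous_on_compose2[OF cont[of UNIV]])
  also have "\<dots> = (integral {b..b + \<eta>} p - integral {b - \<eta>..b} p) - (integral {a..a + \<eta>} p - integral {a - \<eta>..a} p)"
    unfolding integral_shift_real using I[of "a + \<eta>" "b + \<eta>"] I[of "a - \<eta>" "b - \<eta>"] I[of a b]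
      I[of b "b + \<eta>"] I[of "b - \<eta>" b] I[of a "a + \<eta>"] I[of "a - \<eta>" a] assms(2,3)
    by simp
  also have "\<dots> \<le> \<eta>\<^sup>2 + \<eta>\<^sup>2"
    using abs_integral_increment_difference_le[OF lip assms(3), of a]
      abs_integral_increment_difference_le[OF lip assms(3), of b] by linarith
  finally show "integral {a..b} (second_difference p \<eta>) \<le> 2 * \<eta>\<^sup>2" by simp
qed

text \<open>If \<open>f\<close> is not integrable, its integral is the junk value 0, so the bound still holds.\<close>
lemma integral_le_of_dominated:
  fixes f g :: "real \<Rightarrow> real"
  assumes "g integrable_on S" "\<And>x. x \<in> S \<Longrightarrow> f x \<le> g x" "integral S g \<le> B" "0 \<le> B"
  shows "integral S f \<le> B"
proof (cases "f integrable_on S")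
  case True
  then show ?thesis using integral_le[OF True assms(1,2)] assms(3) by linarith
qed (simp add: not_integrable_integral assms(4))

section \<open>The disorder\<close>

lemma sets_poisson_measure [simp]: "sets (poisson_measure r) = sets (count_space UNIV)"
  by (simp add: poisson_measure_def)

lemma exp_series_sums: "(\<lambda>k. r ^ k / fact k) sums exp (r :: real)"
  using exp_converges[of r] by (simp add: divide_inverse_commute)

lemma prob_space_poisson_measure:
  assumes "0 \<le> r"
  shows "prob_space (poisson_measure r)"
proof (rule prob_spaceI)
  have sums: "(\<lambda>k. r ^ k / fact k * exp (- r)) sums 1"
    using sums_mult2[OF exp_series_sums[of r], of "exp (- r)"] by (simp add: exp_minus_inverse)
  have "emeasure (poisson_measure r) (space (poisson_measure r))
      = (\<Sum>k. ennreal (r ^ k / fact k * exp (- r)))"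
    unfolding poisson_measure_def by (simp add: emeasure_density nn_integral_count_space_nat)
  also have "\<dots> = ennreal 1"
    using sums assms by (intro suminf_ennreal2[THEN trans]) (auto simp: sums_iff)
  finally show "emeasure (poisson_measure r) (space (poisson_measure r)) = 1" by simp
qed

lemma integrable_poisson_square:
  assumes "0 \<le> r"
  shows "integrable (poisson_measure r) (\<lambda>k. (real k)\<^sup>2)"
proof -
  have "(real k)\<^sup>2 \<le> 4 ^ k" for k
  proof -
    have "real k \<le> 2 ^ k"
      using less_exp[of k] by (simp add: less_imp_le)
    then have "(real k)\<^sup>2 \<le> (2 ^ k)\<^sup>2" by (intro power_mono) auto
    then show ?thesis by (simp add: power_even_eq[symmetric] power_mult)
  qed
  then have "r ^ k / fact k * exp (- r) * (real k)\<^sup>2 \<le> r ^ k / fact k * 1 * 4 ^ k" for k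
    using assms by (intro mult_mono) auto
  then have bound: "norm ((r ^ k / fact k * exp (- r)) *\<^sub>R (real k)\<^sup>2) \<le> (4 * r) ^ k / fact k" for k
    using assms by (simp add: power_mult_distrib mult_ac)
  have "summable (\<lambda>k. norm ((r ^ k / fact k * exp (- r)) *\<^sub>R (real k)\<^sup>2))"
    by (rule summable_comparison_test'[OF sums_summable[OF exp_series_sums[of "4 * r"]], where N=0])
      (metis bound abs_norm_cancel real_norm_def)
  then show ?thesis
    unfolding poisson_measure_def using assms
    by (subst integrable_density) (auto simp: integrable_count_space_nat_iff)
qed

lemma integrable_comp_fst:
  fixes f :: "'a \<Rightarrow> real"
  assumes "prob_space B" "f \<in> borel_measurable A" "integrable A f"
  shows "integrable (A \<Otimes>\<^sub>M B) (\<lambda>d. f (fst d))"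
proof -
  have "distr (A \<Otimes>\<^sub>M B) A fst = A"
    by (rule prob_space.distr_pair_fst[OF assms(1)])
  then show ?thesis
    using integrable_distr_eq[of fst "A \<Otimes>\<^sub>M B" A f] assms(2,3) by simp
qed

lemma integrable_comp_snd:
  fixes f :: "'b \<Rightarrow> real"
  assumes "prob_space A" "prob_space B" "f \<in> borel_measurable B" "integrable B f"
  shows "integrable (A \<Otimes>\<^sub>M B) (\<lambda>d. f (snd d))"
proof -
  interpret A: prob_space A by fact
  interpret B: prob_space B by fact
  interpret pair_sigma_finite A B ..
  have "integrable (B \<Otimes>\<^sub>M A) (\<lambda>d. f (fst d))"
    by (rule integrable_comp_fst[OF assms(1,3,4)])
  then show ?thesis
    using integrable_product_swap_iff[of "\<lambda>d. f (snd d)"] by (simp add: case_prod_beta')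
qed

lemma integrable_comp_component:
  fixes f :: "'a \<Rightarrow> real"
  assumes "\<And>i. i \<in> I \<Longrightarrow> prob_space (M i)" "i \<in> I" "f \<in> borel_measurable (M i)" "integrable (M i) f"
  shows "integrable (PiM I M) (\<lambda>\<omega>. f (\<omega> i))"
  using integrable_distr_eq[of "\<lambda>\<omega>. \<omega> i" "PiM I M" "M i" f] distr_PiM_component[of I M i] assms
  by simp

definition square_integrable :: "'a measure \<Rightarrow> ('a \<Rightarrow> real) \<Rightarrow> bool" where
  "square_integrable M f \<longleftrightarrow> f \<in> borel_measurable M \<and> integrable M (\<lambda>x. (f x)\<^sup>2)"

lemma square_integrable_const: "finite_measure M \<Longrightarrow> square_integrable M (\<lambda>x. c)"
  by (simp add: square_integrable_def finite_measure.integrable_const)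

lemma square_integrable_add:
  assumes "square_integrable M f" "square_integrable M g"
  shows "square_integrable M (\<lambda>x. f x + g x)"
proof -
  have [measurable]: "f \<in> borel_measurable M" "g \<in> borel_measurable M"
    and int: "integrable M (\<lambda>x. 2 * (f x)\<^sup>2 + 2 * (g x)\<^sup>2)"
    using assms by (auto simp: square_integrable_def)
  have bound: "norm ((f x + g x)\<^sup>2) \<le> norm (2 * (f x)\<^sup>2 + 2 * (g x)\<^sup>2)" for x
  proof -
    have "(f x + g x)\<^sup>2 = 2 * (f x)\<^sup>2 + 2 * (g x)\<^sup>2 - (f x - g x)\<^sup>2"
      by (simp add: power2_eq_square algebra_simps)
    then have "(f x + g x)\<^sup>2 \<le> 2 * (f x)\<^sup>2 + 2 * (g x)\<^sup>2"
      using zero_le_power2[of "f x - g x"] by linarith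
    then show ?thesis by simp
  qed
  have "integrable M (\<lambda>x. (f x + g x)\<^sup>2)"
    by (rule Bochner_Integration.integrable_bound[OF int _ AE_I2[OF bound]]) measurable
  then show ?thesis
    unfolding square_integrable_def by simp
qed

lemma square_integrable_zero: "square_integrable M (\<lambda>x. 0)"
  by (simp add: square_integrable_def)

lemma square_integrable_sum:
  assumes "finite I" "\<And>i. i \<in> I \<Longrightarrow> square_integrable M (f i)"
  shows "square_integrable M (\<lambda>x. \<Sum>i\<in>I. f i x)"
  using assms
proof (induction I rule: finite_induct)
  case (insert i I)
  then show ?case
    using square_integrable_add[of M "f i" "\<lambda>x. \<Sum>i\<in>I. f i x"] by simp
qed (simp add: square_integrable_zero)

lemma square_integrable_cmult:
  "square_integrable M f \<Longrightarrow> square_integrable M (\<lambda>x. c * f x)"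
  unfolding square_integrable_def power_mult_distrib by (auto intro: borel_measurable_times)

lemma square_integrable_abs:
  "square_integrable M f \<Longrightarrow> square_integrable M (\<lambda>x. \<bar>f x\<bar>)"
  unfolding square_integrable_def by (auto intro: borel_measurable_abs)

lemma square_integrable_dominated:
  assumes "square_integrable M f" and [measurable]: "g \<in> borel_measurable M"
    and "\<And>x. x \<in> space M \<Longrightarrow> \<bar>g x\<bar> \<le> f x"
  shows "square_integrable M g"
proof -
  have bound: "norm ((g x)\<^sup>2) \<le> norm ((f x)\<^sup>2)" if "x \<in> space M" for x
    using power_mono[OF assms(3)[OF that], of 2] by simp
  have "integrable M (\<lambda>x. (f x)\<^sup>2)"
    using assms(1) unfolding square_integrable_def by simp
  then have "integrable M (\<lambda>x. (g x)\<^sup>2)"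
    by (rule Bochner_Integration.integrable_bound[OF _ _ AE_I2[OF bound]]) measurable
  then show ?thesis
    unfolding square_integrable_def by simp
qed

lemma (in finite_measure) integrable_of_square_integrable:
  "square_integrable M f \<Longrightarrow> integrable M f"
  unfolding square_integrable_def by (auto intro: square_integrable_imp_integrable)

locale disorder_model =
  fixes \<mu> :: "nat \<Rightarrow> nat set \<Rightarrow> real measure" and \<theta> \<alpha> :: real and n :: nat
  assumes prob_space_coupling: "\<And>X. prob_space (\<mu> n X)"
    and sets_coupling: "\<And>X. sets (\<mu> n X) = sets borel"
    and integrable_coupling_square: "\<And>X. integrable (\<mu> n X) (\<lambda>x. x\<^sup>2)"
    and alpha_nonneg: "0 \<le> \<alpha>"
begin

abbreviation rate :: real where
  "rate \<equiv> \<alpha> * real n powr (\<theta> - 1)"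

lemma prob_space_couplings: "prob_space (\<Pi>\<^sub>M X\<in>Pow {1..n}. \<mu> n X)"
  by (rule prob_space_PiM) (rule prob_space_coupling)

lemma rate_nonneg: "0 \<le> rate"
  by (simp add: alpha_nonneg)

lemma prob_space_fields: "prob_space (\<Pi>\<^sub>M i\<in>{1..n}. poisson_measure rate)"
  by (rule prob_space_PiM) (rule prob_space_poisson_measure[OF rate_nonneg])

sublocale prob_space "disorder \<mu> \<theta> n \<alpha>"
  unfolding disorder_def by (rule prob_space_pair[OF prob_space_couplings prob_space_fields])

lemma measurable_coupling_component:
  "X \<in> Pow {1..n} \<Longrightarrow> (\<lambda>d. fst d X) \<in> measurable (disorder \<mu> \<theta> n \<alpha>) (\<mu> n X)"
  unfolding disorder_def by (rule measurable_compose[OF measurable_fst measurable_component_singleton])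

lemma measurable_coupling:
  "X \<in> Pow {1..n} \<Longrightarrow> (\<lambda>d. fst d X) \<in> borel_measurable (disorder \<mu> \<theta> n \<alpha>)"
  using measurable_coupling_component by (subst (asm) measurable_cong_sets[OF refl sets_coupling])

lemma measurable_field_component:
  "i \<in> {1..n} \<Longrightarrow> (\<lambda>d. snd d i) \<in> measurable (disorder \<mu> \<theta> n \<alpha>) (poisson_measure rate)"
  unfolding disorder_def by (rule measurable_compose[OF measurable_snd measurable_component_singleton])

lemma measurable_field:
  assumes "i \<in> {1..n}"
  shows "(\<lambda>d. real (snd d i)) \<in> borel_measurable (disorder \<mu> \<theta> n \<alpha>)"
proof -
  have "(\<lambda>d. snd d i) \<in> measurable (disorder \<mu> \<theta> n \<alpha>) (count_space UNIV)"
    using measurable_field_component[OF assms]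
    by (subst (asm) measurable_cong_sets[OF refl sets_poisson_measure])
  then show ?thesis by simp
qed

lemma measurable_hamiltonian [measurable]:
  "(\<lambda>d. hamiltonian n (fst d) (snd d) h h1 \<sigma>) \<in> borel_measurable (disorder \<mu> \<theta> n \<alpha>)"
  unfolding hamiltonian_def
  by (intro borel_measurable_diff borel_measurable_uminus borel_measurable_sum borel_measurable_times
      borel_measurable_const measurable_coupling measurable_field) auto

lemma measurable_gibbs [measurable]:
  "(\<lambda>d. gibbs n (fst d) (snd d) h h1 f) \<in> borel_measurable (disorder \<mu> \<theta> n \<alpha>)"
  unfolding gibbs_def partition_fn_def by measurable

lemma measurable_pressure [measurable]:
  "(\<lambda>d. pressure n (fst d) (snd d) h h1) \<in> borel_measurable (disorder \<mu> \<theta> n \<alpha>)"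
  unfolding pressure_def partition_fn_def by measurable

lemma square_integrable_coupling:
  assumes "X \<in> Pow {1..n}"
  shows "square_integrable (disorder \<mu> \<theta> n \<alpha>) (\<lambda>d. fst d X)"
proof -
  have sq: "(\<lambda>x::real. x\<^sup>2) \<in> borel_measurable (\<mu> n X)"
    by (subst measurable_cong_sets[OF sets_coupling refl]) simp
  have "integrable (disorder \<mu> \<theta> n \<alpha>) (\<lambda>d. (fst d X)\<^sup>2)"
    unfolding disorder_def
    by (intro integrable_comp_fst[OF prob_space_fields] measurable_compose[OF measurable_component_singleton[OF assms, of "\<mu> n"] sq]
        integrable_comp_component[of _ "\<mu> n", OF prob_space_coupling assms sq integrable_coupling_square])
  then show ?thesis
    unfolding square_integrable_def using measurable_coupling[OF assms] by simp
qed

lemma square_integrable_field: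
  assumes "i \<in> {1..n}"
  shows "square_integrable (disorder \<mu> \<theta> n \<alpha>) (\<lambda>d. real (snd d i))"
proof -
  have sq: "(\<lambda>k. (real k)\<^sup>2) \<in> borel_measurable (poisson_measure rate)"
    by (subst measurable_cong_sets[OF sets_poisson_measure refl]) simp
  have "integrable (disorder \<mu> \<theta> n \<alpha>) (\<lambda>d. (real (snd d i))\<^sup>2)"
    unfolding disorder_def
    by (intro integrable_comp_snd[OF prob_space_couplings prob_space_fields]
        measurable_compose[OF measurable_component_singleton[OF assms, of "\<lambda>_. poisson_measure rate"] sq]
        integrable_comp_component[OF _ assms sq] prob_space_poisson_measure integrable_poisson_square rate_nonneg)
  then show ?thesis
    unfolding square_integrable_def using measurable_field[OF assms] by simp
qed

lemma square_integrable_pressure: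
  "square_integrable (disorder \<mu> \<theta> n \<alpha>) (\<lambda>d. pressure n (fst d) (snd d) h h1)"
proof (rule square_integrable_dominated[OF _ measurable_pressure])
  show "square_integrable (disorder \<mu> \<theta> n \<alpha>) (\<lambda>d. (\<Sum>X\<in>Pow {1..n}. \<bar>fst d X\<bar>) + real n * \<bar>h\<bar>
      + \<bar>h1\<bar> * (\<Sum>i\<in>{1..n}. real (snd d i)) + ln (card (spins n)))"
    by (intro square_integrable_add square_integrable_sum square_integrable_abs square_integrable_cmult
        square_integrable_const square_integrable_coupling square_integrable_field finite_measure_axioms) auto
  show "\<bar>pressure n (fst d) (snd d) h h1\<bar> \<le> (\<Sum>X\<in>Pow {1..n}. \<bar>fst d X\<bar>) + real n * \<bar>h\<bar>
      + \<bar>h1\<bar> * (\<Sum>i\<in>{1..n}. real (snd d i)) + ln (card (spins n))" for d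
    by (intro abs_pressure_le abs_hamiltonian_le)
qed

lemma integrable_pressure:
  "integrable (disorder \<mu> \<theta> n \<alpha>) (\<lambda>d. pressure n (fst d) (snd d) h h1)"
  by (rule integrable_of_square_integrable[OF square_integrable_pressure])

lemma integrable_pressure_deviation_square:
  "integrable (disorder \<mu> \<theta> n \<alpha>) (\<lambda>d. (pressure n (fst d) (snd d) h h1 - c)\<^sup>2)"
  using square_integrable_add[OF square_integrable_pressure square_integrable_const[OF finite_measure_axioms, of "- c"]]
  by (simp add: square_integrable_def)

lemma integrable_gibbs:
  assumes "\<And>\<sigma>. \<sigma> \<in> spins n \<Longrightarrow> \<bar>f \<sigma>\<bar> \<le> B"
  shows "integrable (disorder \<mu> \<theta> n \<alpha>) (\<lambda>d. gibbs n (fst d) (snd d) h h1 f)"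
proof (rule integrable_const_bound[where B = B])
  show "AE d in disorder \<mu> \<theta> n \<alpha>. norm (gibbs n (fst d) (snd d) h h1 f) \<le> B"
  proof (rule AE_I2)
    fix d
    interpret positive_weights "spins n" "\<lambda>\<sigma>. exp (- hamiltonian n (fst d) (snd d) h h1 \<sigma>)"
      by (rule positive_weights_boltzmann)
    show "norm (gibbs n (fst d) (snd d) h h1 f) \<le> B"
      unfolding gibbs_eq_weighted_avg real_norm_def by (rule abs_avg_le[OF assms])
  qed
qed simp

definition mean_pressure :: "real \<Rightarrow> real \<Rightarrow> real" where
  "mean_pressure h1 h = (\<integral>d. pressure n (fst d) (snd d) h h1 \<partial>disorder \<mu> \<theta> n \<alpha>)"

definition mean_overlap :: "real \<Rightarrow> real \<Rightarrow> real" where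
  "mean_overlap h1 h = (\<integral>d. gibbs n (fst d) (snd d) h h1 (overlap n) \<partial>disorder \<mu> \<theta> n \<alpha>)"

lemma mean_pressure_diff:
  "mean_pressure h1 a - mean_pressure h1 b
     = (\<integral>d. pressure n (fst d) (snd d) a h1 - pressure n (fst d) (snd d) b h1 \<partial>disorder \<mu> \<theta> n \<alpha>)"
  unfolding mean_pressure_def by (rule Bochner_Integration.integral_diff[OF integrable_pressure integrable_pressure, symmetric])

lemma mean_pressure_lipschitz:
  assumes "1 \<le> n"
  shows "\<bar>mean_pressure h1 a - mean_pressure h1 b\<bar> \<le> \<bar>a - b\<bar>"
proof -
  have "\<bar>mean_pressure h1 a - mean_pressure h1 b\<bar>
      \<le> (\<integral>d. \<bar>pressure n (fst d) (snd d) a h1 - pressure n (fst d) (snd d) b h1\<bar> \<partial>disorder \<mu> \<theta> n \<alpha>)"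
    unfolding mean_pressure_diff by (rule integral_abs_bound)
  also have "\<dots> \<le> (\<integral>d. \<bar>a - b\<bar> \<partial>disorder \<mu> \<theta> n \<alpha>)"
    by (intro Bochner_Integration.integral_mono Bochner_Integration.integrable_diff
        integrable_abs integrable_pressure pressure_lipschitz[OF assms]) simp_all
  finally show ?thesis by (simp add: prob_space)
qed

lemma mean_overlap_tangent:
  assumes "1 \<le> n"
  shows "t * mean_overlap h1 h \<le> mean_pressure h1 (h + t) - mean_pressure h1 h"
  unfolding mean_overlap_def mean_pressure_diff integral_mult_right_zero[symmetric]
  by (intro Bochner_Integration.integral_mono Bochner_Integration.integrable_mult_right
      Bochner_Integration.integrable_diff integrable_pressure
      integrable_gibbs[OF abs_overlap_le_1] pressure_tangent[OF assms])

lemma integrable_gibbs_overlap_deviation: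
  "integrable (disorder \<mu> \<theta> n \<alpha>) (\<lambda>d. gibbs n (fst d) (snd d) h h1 (\<lambda>\<sigma>. (overlap n \<sigma> - m)\<^sup>2))"
proof (rule integrable_gibbs)
  fix \<sigma> assume "\<sigma> \<in> spins n"
  then have "\<bar>overlap n \<sigma> - m\<bar> \<le> 1 + \<bar>m\<bar>"
    using abs_overlap_le_1 by fastforce
  then show "\<bar>(overlap n \<sigma> - m)\<^sup>2\<bar> \<le> (1 + \<bar>m\<bar>)\<^sup>2"
    using power_mono[of "\<bar>overlap n \<sigma> - m\<bar>" "1 + \<bar>m\<bar>" 2] by simp
qed

lemma mean_pressure_second_difference_nonneg:
  "1 \<le> n \<Longrightarrow> 0 \<le> second_difference (mean_pressure h1) e h"
  using mean_overlap_tangent[of e h1 h] mean_overlap_tangent[of "- e" h1 h]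
  unfolding second_difference_def by simp

lemma integrable_second_difference_pressure:
  "integrable (disorder \<mu> \<theta> n \<alpha>) (\<lambda>d. second_difference (\<lambda>x. pressure n (fst d) (snd d) x h1) e h)"
  unfolding second_difference_def
  by (intro Bochner_Integration.integrable_add Bochner_Integration.integrable_diff
      Bochner_Integration.integrable_mult_right integrable_pressure)

lemma integral_second_difference_pressure:
  "(\<integral>d. second_difference (\<lambda>x. pressure n (fst d) (snd d) x h1) e h \<partial>disorder \<mu> \<theta> n \<alpha>)
     = second_difference (mean_pressure h1) e h"
  unfolding second_difference_def mean_pressure_def
  by (simp add: integrable_pressure)

lemma overlap_fluctuation_le:
  assumes n: "1 \<le> n" and \<delta>: "0 < \<delta>" "0 \<le> h - \<delta>" "h + \<delta> \<le> 1"
    and conc: "\<And>x. x \<in> {0..1} \<Longrightarrow>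
      (\<integral>d. (pressure n (fst d) (snd d) x h1 - mean_pressure h1 x)\<^sup>2 \<partial>disorder \<mu> \<theta> n \<alpha>) \<le> CP / real n"
  shows "(\<integral>d. gibbs n (fst d) (snd d) h h1 (\<lambda>\<sigma>. (overlap n \<sigma> - mean_overlap h1 h)\<^sup>2) \<partial>disorder \<mu> \<theta> n \<alpha>)
    \<le> 16 * real n * second_difference (mean_pressure h1) (1 / (2 * real n)) h
      + 12 * CP / (real n * \<delta>\<^sup>2) + 12 * second_difference (mean_pressure h1) \<delta> h / \<delta>"
proof -
  define s where "s = second_difference (mean_pressure h1) \<delta> h"
  define e where "e x d = pressure n (fst d) (snd d) x h1 - mean_pressure h1 x" for x d
  define E where "E x = (\<integral>d. (e x d)\<^sup>2 \<partial>disorder \<mu> \<theta> n \<alpha>)" for x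
  have int_e: "integrable (disorder \<mu> \<theta> n \<alpha>) (\<lambda>d. (e x d)\<^sup>2)" for x
    unfolding e_def by (rule integrable_pressure_deviation_square)
  have "(\<integral>d. gibbs n (fst d) (snd d) h h1 (\<lambda>\<sigma>. (overlap n \<sigma> - mean_overlap h1 h)\<^sup>2) \<partial>disorder \<mu> \<theta> n \<alpha>)
      \<le> (\<integral>d. 16 * real n * second_difference (\<lambda>x. pressure n (fst d) (snd d) x h1) (1 / (2 * real n)) h
          + 3 / \<delta>\<^sup>2 * ((e (h + \<delta>) d)\<^sup>2 + (e h d)\<^sup>2 + s\<^sup>2) + 3 / \<delta>\<^sup>2 * ((e h d)\<^sup>2 + (e (h - \<delta>) d)\<^sup>2 + s\<^sup>2)
        \<partial>disorder \<mu> \<theta> n \<alpha>)"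
    unfolding e_def s_def
    using mean_overlap_tangent[OF n, of \<delta> h1 h] mean_overlap_tangent[OF n, of "- \<delta>" h1 h]
    by (intro Bochner_Integration.integral_mono gibbs_overlap_deviation_le[OF n \<delta>(1)]
        integrable_gibbs_overlap_deviation Bochner_Integration.integrable_add
        Bochner_Integration.integrable_mult_right integrable_second_difference_pressure
        integrable_pressure_deviation_square integrable_const) simp_all
  also have "\<dots> = 16 * real n * second_difference (mean_pressure h1) (1 / (2 * real n)) h
      + 3 / \<delta>\<^sup>2 * (E (h + \<delta>) + E h + s\<^sup>2) + 3 / \<delta>\<^sup>2 * (E h + E (h - \<delta>) + s\<^sup>2)"
    unfolding E_def
    by (simp add: integral_second_difference_pressure integrable_second_difference_pressure int_e prob_space)
  also have "\<dots> \<le> 16 * real n * second_difference (mean_pressure h1) (1 / (2 * real n)) h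
      + 3 / \<delta>\<^sup>2 * (2 * (CP / real n) + s\<^sup>2) + 3 / \<delta>\<^sup>2 * (2 * (CP / real n) + s\<^sup>2)"
    using conc[of "h + \<delta>"] conc[of h] conc[of "h - \<delta>"] \<delta>
    unfolding E_def e_def by (intro add_mono mult_left_mono) auto
  also have "\<dots> \<le> 16 * real n * second_difference (mean_pressure h1) (1 / (2 * real n)) h
      + 12 * CP / (real n * \<delta>\<^sup>2) + 12 * s / \<delta>"
  proof -
    have "s\<^sup>2 \<le> 2 * \<delta> * s"
      using mean_pressure_second_difference_nonneg[OF n, of h1 \<delta> h] \<delta>(1)
        second_difference_le_lipschitz[OF mean_pressure_lipschitz[OF n], of h1 \<delta> h]
      unfolding s_def power2_eq_square by (intro mult_right_mono) simp_all
    then have "6 * s\<^sup>2 / \<delta>\<^sup>2 \<le> 12 * s / \<delta>"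
      using \<delta>(1) by (simp add: power2_eq_square divide_simps)
    moreover have "3 / \<delta>\<^sup>2 * (2 * (CP / real n) + s\<^sup>2) + 3 / \<delta>\<^sup>2 * (2 * (CP / real n) + s\<^sup>2)
        = 12 * CP / (real n * \<delta>\<^sup>2) + 6 * s\<^sup>2 / \<delta>\<^sup>2"
      using \<delta>(1) n by (simp add: field_simps)
    ultimately show ?thesis by linarith
  qed
  finally show ?thesis unfolding s_def .
qed

lemma integral_overlap_fluctuation_le:
  assumes n: "1 \<le> n" and \<delta>: "0 < \<delta>" "\<delta> \<le> hl" "hl \<le> hh" "hh + \<delta> \<le> 1" and "0 \<le> CP"
    and conc: "\<And>x. x \<in> {0..1} \<Longrightarrow>
      (\<integral>d. (pressure n (fst d) (snd d) x h1
          - (\<integral>d'. pressure n (fst d') (snd d') x h1 \<partial>disorder \<mu> \<theta> n \<alpha>)) ^ 2 \<partial>disorder \<mu> \<theta> n \<alpha>)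
        \<le> CP / real n"
  shows "integral {hl..hh} (\<lambda>h0.
      let m = (\<integral>d. gibbs n (fst d) (snd d) h0 h1 (overlap n) \<partial>disorder \<mu> \<theta> n \<alpha>) in
      (\<integral>d. gibbs n (fst d) (snd d) h0 h1 (\<lambda>\<sigma>. (overlap n \<sigma> - m) ^ 2) \<partial>disorder \<mu> \<theta> n \<alpha>))
    \<le> 8 / real n + 12 * CP / (real n * \<delta>\<^sup>2) + 24 * \<delta>"
  unfolding Let_def mean_overlap_def[symmetric]
proof (rule integral_le_of_dominated)
  define \<eta> where "\<eta> = 1 / (2 * real n)"
  define K where "K = 12 * CP / (real n * \<delta>\<^sup>2)"
  define G where "G h = 16 * real n * second_difference (mean_pressure h1) \<eta> h + K
    + 12 / \<delta> * second_difference (mean_pressure h1) \<delta> h" for h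
  note lip = mean_pressure_lipschitz[OF n, of h1]
  have "0 \<le> \<eta>" and "0 \<le> K"
    using n \<open>0 \<le> CP\<close> by (simp_all add: \<eta>_def K_def)
  note sd_\<eta> = integral_second_difference_le[OF lip \<delta>(3) \<open>0 \<le> \<eta>\<close>]
  note sd_\<delta> = integral_second_difference_le[OF lip \<delta>(3) less_imp_le[OF \<delta>(1)]]
  have int_\<eta>: "(\<lambda>h. 16 * real n * second_difference (mean_pressure h1) \<eta> h) integrable_on {hl..hh}"
    and int_\<delta>: "(\<lambda>h. 12 / \<delta> * second_difference (mean_pressure h1) \<delta> h) integrable_on {hl..hh}"
    using integrable_on_cmult_left[OF sd_\<eta>(1), of "16 * real n"]
      integrable_on_cmult_left[OF sd_\<delta>(1), of "12 / \<delta>"] by simp_all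
  show "G integrable_on {hl..hh}"
    unfolding G_def by (intro integrable_add int_\<eta> int_\<delta> integrable_const_ivl)
  show "\<integral>d. gibbs n (fst d) (snd d) h h1 (\<lambda>\<sigma>. (overlap n \<sigma> - mean_overlap h1 h)\<^sup>2) \<partial>disorder \<mu> \<theta> n \<alpha> \<le> G h"
    if "h \<in> {hl..hh}" for h
    using overlap_fluctuation_le[OF n \<delta>(1) _ _ conc[folded mean_pressure_def], of h] that \<delta>
    unfolding G_def \<eta>_def K_def by simp
  have "integral {hl..hh} G = integral {hl..hh} (\<lambda>h. 16 * real n * second_difference (mean_pressure h1) \<eta> h)
      + integral {hl..hh} (\<lambda>h. K) + integral {hl..hh} (\<lambda>h. 12 / \<delta> * second_difference (mean_pressure h1) \<delta> h)"
    unfolding G_def by (simp only: integral_add integrable_add int_\<eta> int_\<delta> integrable_const_ivl)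
  also have "\<dots> = 16 * real n * integral {hl..hh} (second_difference (mean_pressure h1) \<eta>) + (hh - hl) * K
        + 12 / \<delta> * integral {hl..hh} (second_difference (mean_pressure h1) \<delta>)"
    using \<delta>(3) by (simp add: content_real)
  also have "\<dots> \<le> 16 * real n * (2 * \<eta>\<^sup>2) + K + 12 / \<delta> * (2 * \<delta>\<^sup>2)"
    using sd_\<eta>(2) sd_\<delta>(2) \<delta> \<open>0 \<le> K\<close> mult_left_le_one_le[of K "hh - hl"]
    by (intro add_mono mult_left_mono) auto
  also have "\<dots> = 8 / real n + 12 * CP / (real n * \<delta>\<^sup>2) + 24 * \<delta>"
    using n \<delta>(1) by (simp add: \<eta>_def K_def power2_eq_square field_simps)
  finally show "integral {hl..hh} G \<le> 8 / real n + 12 * CP / (real n * \<delta>\<^sup>2) + 24 * \<delta>" .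
  show "0 \<le> 8 / real n + 12 * CP / (real n * \<delta>\<^sup>2) + 24 * \<delta>"
    using \<open>0 \<le> CP\<close> \<delta>(1) by simp
qed

end

lemma eventually_cube_root_scale:
  fixes a b :: real
  assumes "0 < a" "b < 1"
  shows "\<exists>N. \<forall>n\<ge>N. 2 \<le> real n powr (1/3) \<and> 8 / (5 * real n powr (1/3)) \<le> a
    \<and> b + 8 / (5 * real n powr (1/3)) \<le> 1"
proof -
  have "filterlim (\<lambda>n. real n powr (1/3)) at_top sequentially"
    by real_asymp
  then obtain N where N: "\<And>n. N \<le> n \<Longrightarrow> max 2 (max (8 / (5 * a)) (8 / (5 * (1 - b)))) \<le> real n powr (1/3)"
    unfolding filterlim_at_top eventually_sequentially by blast
  have "2 \<le> t \<and> 8 / (5 * t) \<le> a \<and> b + 8 / (5 * t) \<le> 1"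
    if "max 2 (max (8 / (5 * a)) (8 / (5 * (1 - b)))) \<le> t" for t :: real
  proof -
    have "2 \<le> t" "8 / (5 * a) \<le> t" "8 / (5 * (1 - b)) \<le> t"
      using that by auto
    then show ?thesis
      using assms by (simp add: field_simps)
  qed
  then show ?thesis
    using N by blast
qed

lemma cube_root_ge_2:
  assumes "2 \<le> real n powr (1/3)"
  shows "0 < n" and "(real n powr (1/3)) ^ 3 = real n"
proof -
  show "0 < n"
    using assms by (cases "n = 0") simp_all
  then show "(real n powr (1/3)) ^ 3 = real n"
    using powr_power[of "real n" "1/3" 3] by simp
qed

lemma cube_root_scale_bound:
  fixes CP :: real
  assumes "2 \<le> t" "t ^ 3 = real n" "0 \<le> CP"
  shows "8 / real n + 12 * CP / (real n * (8 / (5 * t))\<^sup>2) + 24 * (8 / (5 * t)) \<le> (5 * CP + 42) / t"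
proof -
  have "8 / real n \<le> 2 / t"
    using assms(1) mult_mono[OF assms(1) assms(1)] unfolding assms(2)[symmetric]
    by (simp add: power3_eq_cube field_simps)
  moreover have "12 * CP / (real n * (8 / (5 * t))\<^sup>2) = 75 * CP / (16 * t)"
    using assms(1) unfolding assms(2)[symmetric] by (simp add: power2_eq_square power3_eq_cube field_simps)
  moreover have "2 / t + 75 * CP / (16 * t) + 24 * (8 / (5 * t)) = (2 + 75 / 16 * CP + 192 / 5) / t"
    using assms(1) by (simp add: field_simps)
  moreover have "(2 + 75 / 16 * CP + 192 / 5) / t \<le> (5 * CP + 42) / t"
    using assms(1,3) by (intro divide_right_mono) simp_all
  ultimately show ?thesis
    by linarith
qed

theorem theorem2p2:
  fixes \<theta> hl hh h1 \<alpha> C CP :: real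
    and \<mu> :: "nat \<Rightarrow> nat set \<Rightarrow> real measure"
  assumes theta: "1/2 < \<theta>" "\<theta> \<le> 7/8"
    and hint: "0 < hl" "hl \<le> hh" "hh < 1"
    and h1: "0 \<le> h1" "h1 \<le> 1"
    and alpha: "0 \<le> \<alpha>" "\<alpha> \<le> 1"
    and corr: "\<And>n J tau h0 i j. (\<forall>X\<in>Pow {1..n}. 0 \<le> J X) \<Longrightarrow> h0 \<in> {hl..hh} \<Longrightarrow>
        i \<in> {1..n} \<Longrightarrow> j \<in> {1..n} \<Longrightarrow>
        gibbs n J tau h0 h1 (\<lambda>\<sigma>. \<sigma> i * \<sigma> j)
          - gibbs n J tau h0 h1 (\<lambda>\<sigma>. \<sigma> i) * gibbs n J tau h0 h1 (\<lambda>\<sigma>. \<sigma> j) \<ge> 0"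
    and mu_prob: "\<And>n X. prob_space (\<mu> n X)"
    and mu_sets: "\<And>n X. sets (\<mu> n X) = sets borel"
    and mu_nonneg: "\<And>n X. AE x in \<mu> n X. 0 \<le> x"
    and mu_L2: "\<And>n X. integrable (\<mu> n X) (\<lambda>x. x ^ 2)"
    and var_bound: "\<And>n. (\<Sum>X\<in>Pow {1..n}. prob_space.variance (\<mu> n X) (\<lambda>x. x)) \<le> C * real n"
    and CP_pos: "0 < CP"
    and conc: "\<And>n h0 h1' \<alpha>'. 1 \<le> n \<Longrightarrow> h0 \<in> {0..1} \<Longrightarrow> h1' \<in> {0..1} \<Longrightarrow> \<alpha>' \<in> {0..1} \<Longrightarrow>
        (\<integral>d. (pressure n (fst d) (snd d) h0 h1'
               - (\<integral>d'. pressure n (fst d') (snd d') h0 h1' \<partial>disorder \<mu> \<theta> n \<alpha>')) ^ 2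
           \<partial>disorder \<mu> \<theta> n \<alpha>') \<le> CP / real n"
  shows "\<exists>N. \<forall>n\<ge>N.
    integral {hl..hh} (\<lambda>h0.
      let m = (\<integral>d. gibbs n (fst d) (snd d) h0 h1 (overlap n) \<partial>disorder \<mu> \<theta> n \<alpha>) in
      (\<integral>d. gibbs n (fst d) (snd d) h0 h1 (\<lambda>\<sigma>. (overlap n \<sigma> - m) ^ 2) \<partial>disorder \<mu> \<theta> n \<alpha>))
    \<le> (5 * CP + 42) / real n powr (1/3)"
proof -
  obtain N where scale: "\<And>n. N \<le> n \<Longrightarrow> 2 \<le> real n powr (1/3) \<and> 8 / (5 * real n powr (1/3)) \<le> hl
      \<and> hh + 8 / (5 * real n powr (1/3)) \<le> 1"
    using eventually_cube_root_scale[OF hint(1,3)] by blast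
  have model: "disorder_model \<mu> \<alpha> n" for n
    by (rule disorder_model.intro) (simp_all add: mu_prob mu_sets mu_L2 alpha)
  show ?thesis
    using scale cube_root_ge_2 CP_pos hint h1 alpha conc[where h1' = h1 and \<alpha>' = \<alpha>]
    by (intro exI[of _ N] allI impI order_trans[OF disorder_model.integral_overlap_fluctuation_le[OF model]
        cube_root_scale_bound]) (auto simp: Suc_le_eq)
qed

end
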